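(* Let $d\geq 2$ and $N\ge1$ be integers, and let $X_d$, $X_N$, $X_2$ be $\chi^2$ random variables with $d$, $N$ and $2$ degrees of freedom respectively, with $X_d$ and $X_N$ independent. Then the function $$x\mapsto\frac{\mathbb E\big[(X_d-x\frac{X_N}{N})_+\big]}{\mathbb E\big[(X_2-x)_+\big]}$$ is increasing on $\{x\geq d\}$.
   Context: $(y)_+=\max(y,0)$. *)

theory Defs
  imports "HOL-Probability.Probability"
begin

definition chi_sq_density :: "nat \<Rightarrow> real \<Rightarrow> real" where
  "chi_sq_density k t =
     (if t > 0 then t powr (real k / 2 - 1) * exp (- t / 2) / (2 powr (real k / 2) * Gamma (real k / 2))
      else 0)"

end

theory Submission
  imports Defs
begin

text \<open>Substituting \<open>s = a + r\<close> gives \<open>E (X_k - a)_+ = exp (-a/2) J_k(a)\<close> for \<open>a \<ge> 0\<close>, where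
  \<open>J_k(a) = \<integral> r (a + r)^(k/2 - 1) exp (-r/2) / c_k dr\<close> is nondecreasing in \<open>a\<close> for \<open>k \<ge> 2\<close>
  and constant for \<open>k = 2\<close>. So the denominator is a constant multiple of \<open>exp (-x/2)\<close>, while by
  independence the numerator is \<open>\<integral> f_N(u) exp (-xu/2N) J_d(xu/N) du\<close>. The substitution
  \<open>u = Nv/(N + x)\<close> absorbs the exponential into the density \<open>f_N\<close> and turns the numerator into
  \<open>(N/(N + x))^(N/2) \<integral> f_N(v) J_d(xv/(N + x)) dv\<close>. Hence the ratio is a constant times
  \<open>exp (x/2) (N/(N + x))^(N/2)\<close>, which is nondecreasing since \<open>N ln (1 + t/N) \<le> t\<close>, times an
  integral that is nondecreasing in \<open>x\<close>. The argument works on all of \<open>x \<ge> 0\<close>.\<close>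

lemma borel_measurable_chi_sq_density [measurable]: "chi_sq_density k \<in> borel_measurable borel"
  unfolding chi_sq_density_def by measurable

lemma chi_sq_density_nonneg: "chi_sq_density k t \<ge> 0"
  by (cases "k = 0") (auto simp: chi_sq_density_def intro!: divide_nonneg_pos)

definition chi_sq_tail_factor :: "nat \<Rightarrow> real \<Rightarrow> ennreal" where
  "chi_sq_tail_factor k a = (\<integral>\<^sup>+r. ennreal (if r > 0 then (a + r) powr (real k / 2 - 1) * exp (- r / 2)
        / (2 powr (real k / 2) * Gamma (real k / 2)) * r else 0) \<partial>lborel)"

lemma borel_measurable_chi_sq_tail_factor [measurable]:
  "chi_sq_tail_factor k \<in> borel_measurable borel"
  unfolding chi_sq_tail_factor_def by measurable

lemma chi_sq_density_shift:
  assumes "a \<ge> 0" "r > 0"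
  shows "chi_sq_density k (a + r) * r = exp (- a / 2) * ((a + r) powr (real k / 2 - 1) * exp (- r / 2)
           / (2 powr (real k / 2) * Gamma (real k / 2)) * r)"
  using assms by (simp add: chi_sq_density_def exp_add[symmetric] field_simps)

lemma nn_integral_chi_sq_excess:
  assumes "a \<ge> 0"
  shows "(\<integral>\<^sup>+s. ennreal (chi_sq_density k s) * ennreal (max (s - a) 0) \<partial>lborel)
        = ennreal (exp (- a / 2)) * chi_sq_tail_factor k a"
proof -
  have "(\<integral>\<^sup>+s. ennreal (chi_sq_density k s) * ennreal (max (s - a) 0) \<partial>lborel)
      = (\<integral>\<^sup>+r. ennreal (chi_sq_density k (a + 1 * r)) * ennreal (max ((a + 1 * r) - a) 0) \<partial>lborel)"
    using nn_integral_real_affine[of "\<lambda>s. ennreal (chi_sq_density k s) * ennreal (max (s - a) 0)" 1 a]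
    by simp
  also have "\<dots> = (\<integral>\<^sup>+r. ennreal (exp (- a / 2)) * ennreal (if r > 0 then (a + r) powr (real k / 2 - 1)
        * exp (- r / 2) / (2 powr (real k / 2) * Gamma (real k / 2)) * r else 0) \<partial>lborel)"
  proof (intro nn_integral_cong)
    fix r :: real
    show "ennreal (chi_sq_density k (a + 1 * r)) * ennreal (max ((a + 1 * r) - a) 0)
        = ennreal (exp (- a / 2)) * ennreal (if r > 0 then (a + r) powr (real k / 2 - 1)
        * exp (- r / 2) / (2 powr (real k / 2) * Gamma (real k / 2)) * r else 0)" (is "_ = ?rhs")
    proof (cases "r > 0")
      case True
      then have "ennreal (chi_sq_density k (a + 1 * r)) * ennreal (max ((a + 1 * r) - a) 0)
          = ennreal (chi_sq_density k (a + r) * r)"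
        by (simp add: ennreal_mult'')
      also have "\<dots> = ?rhs"
        unfolding chi_sq_density_shift[OF assms True] using True by (subst ennreal_mult') auto
      finally show ?thesis .
    qed simp
  qed
  also have "\<dots> = ennreal (exp (- a / 2)) * chi_sq_tail_factor k a"
    unfolding chi_sq_tail_factor_def by (rule nn_integral_cmult) measurable
  finally show ?thesis .
qed

lemma chi_sq_tail_factor_mono:
  assumes "k \<ge> 2" "0 \<le> a" "a \<le> b"
  shows "chi_sq_tail_factor k a \<le> chi_sq_tail_factor k b"
  unfolding chi_sq_tail_factor_def
proof (intro nn_integral_mono ennreal_leI)
  fix r :: real
  have "(a + r) powr (real k / 2 - 1) \<le> (b + r) powr (real k / 2 - 1)" if "r > 0"
    using assms that by (intro powr_mono2) auto
  then show "(if r > 0 then (a + r) powr (real k / 2 - 1) * exp (- r / 2)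
               / (2 powr (real k / 2) * Gamma (real k / 2)) * r else 0)
           \<le> (if r > 0 then (b + r) powr (real k / 2 - 1) * exp (- r / 2)
               / (2 powr (real k / 2) * Gamma (real k / 2)) * r else 0)"
    using assms by (auto intro!: mult_right_mono divide_right_mono)
qed

lemma chi_sq_tail_factor_2:
  assumes "a \<ge> 0"
  shows "chi_sq_tail_factor 2 a = chi_sq_tail_factor 2 0"
  unfolding chi_sq_tail_factor_def using assms by (intro nn_integral_cong) simp

lemma chi_sq_density_scale:
  assumes "l > 0"
  shows "l * chi_sq_density k (l * v) * exp (- (1 - l) * v / 2) = l powr (real k / 2) * chi_sq_density k v"
proof (cases "v > 0")
  case True
  have "l * (l * v) powr (real k / 2 - 1) = l powr (real k / 2) * v powr (real k / 2 - 1)"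
    using assms True by (simp add: powr_mult powr_diff)
  moreover have "exp (- (l * v) / 2) * exp (- (1 - l) * v / 2) = exp (- v / 2)"
    by (simp add: exp_add[symmetric] field_simps)
  ultimately have "(l * (l * v) powr (real k / 2 - 1)) * (exp (- (l * v) / 2) * exp (- (1 - l) * v / 2))
      = l powr (real k / 2) * (v powr (real k / 2 - 1) * exp (- v / 2))"
    by simp
  then show ?thesis
    using assms True by (simp add: chi_sq_density_def field_simps)
next
  case False
  then show ?thesis
    using assms by (simp add: chi_sq_density_def zero_less_mult_iff)
qed

lemma nn_integral_chi_sq_exp_tilt:
  assumes "c \<ge> 0" and [measurable]: "g \<in> borel_measurable borel"
  shows "(\<integral>\<^sup>+u. ennreal (chi_sq_density k u * exp (- c * u / 2)) * g (c * u) \<partial>lborel)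
       = ennreal ((1 / (1 + c)) powr (real k / 2))
           * (\<integral>\<^sup>+v. ennreal (chi_sq_density k v) * g (c * v / (1 + c)) \<partial>lborel)"
proof -
  define l where "l = 1 / (1 + c)"
  have l: "l > 0" "c * l = 1 - l"
    using assms(1) by (auto simp: l_def field_simps)
  let ?F = "\<lambda>u. ennreal (chi_sq_density k u * exp (- c * u / 2)) * g (c * u)"
  have "(\<integral>\<^sup>+u. ?F u \<partial>lborel) = ennreal l * (\<integral>\<^sup>+v. ?F (0 + l * v) \<partial>lborel)"
    using nn_integral_real_affine[of ?F l 0] l by simp
  also have "\<dots> = (\<integral>\<^sup>+v. ennreal l * ?F (l * v) \<partial>lborel)"
    by (subst nn_integral_cmult) auto
  also have "\<dots> = (\<integral>\<^sup>+v. ennreal (l powr (real k / 2)) * (ennreal (chi_sq_density k v) * g (c * v / (1 + c))) \<partial>lborel)"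
  proof (intro nn_integral_cong)
    fix v :: real
    have "l * (chi_sq_density k (l * v) * exp (- c * (l * v) / 2))
        = l * chi_sq_density k (l * v) * exp (- (1 - l) * v / 2)"
      using l by (simp add: mult.assoc[symmetric] mult.commute[of c])
    also have "\<dots> = l powr (real k / 2) * chi_sq_density k v"
      using l(1) by (rule chi_sq_density_scale)
    finally have "ennreal l * ennreal (chi_sq_density k (l * v) * exp (- c * (l * v) / 2))
        = ennreal (l powr (real k / 2)) * ennreal (chi_sq_density k v)"
      using l by (simp add: ennreal_mult'[symmetric])
    moreover have "c * (l * v) = c * v / (1 + c)"
      by (simp add: l_def)
    ultimately show "ennreal l * ?F (l * v)
        = ennreal (l powr (real k / 2)) * (ennreal (chi_sq_density k v) * g (c * v / (1 + c)))"
      by (metis mult.assoc)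
  qed
  also have "\<dots> = ennreal (l powr (real k / 2)) * (\<integral>\<^sup>+v. ennreal (chi_sq_density k v) * g (c * v / (1 + c)) \<partial>lborel)"
    by (rule nn_integral_cmult) measurable
  finally show ?thesis
    unfolding l_def .
qed

lemma exp_mult_inverse_powr_mono:
  fixes n x1 x2 :: real
  assumes "n > 0" "0 \<le> x1" "x1 \<le> x2"
  shows "exp (x1 / 2) * (1 / (1 + x1 / n)) powr (n / 2) \<le> exp (x2 / 2) * (1 / (1 + x2 / n)) powr (n / 2)"
proof -
  have pos: "1 + x1 / n \<ge> 1" "1 + x1 / n > 0" "1 + x2 / n > 0"
    using assms by (auto intro: add_pos_nonneg)
  have "ln (1 + x2 / n) - ln (1 + x1 / n) = ln ((1 + x2 / n) / (1 + x1 / n))"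
    using pos by (simp add: ln_div)
  also have "\<dots> \<le> (1 + x2 / n) / (1 + x1 / n) - 1"
    using pos by (intro ln_le_minus_one) auto
  also have "\<dots> = ((1 + x2 / n) - (1 + x1 / n)) / (1 + x1 / n)"
    using pos by (simp only: diff_divide_distrib) simp
  also have "\<dots> = (x2 / n - x1 / n) / (1 + x1 / n)"
    by simp
  also have "\<dots> \<le> (x2 / n - x1 / n) / 1"
    using pos assms by (intro divide_left_mono) (auto simp: divide_right_mono)
  finally have "n * (ln (1 + x2 / n) - ln (1 + x1 / n)) \<le> x2 - x1"
    using assms by (simp add: field_simps)
  then show ?thesis
    using pos by (simp add: powr_def ln_div exp_add[symmetric] algebra_simps)
qed

lemma mult_divide_one_plus_mono:
  fixes c1 c2 v :: real
  assumes "0 \<le> c1" "c1 \<le> c2" "v \<ge> 0"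
  shows "c1 * v / (1 + c1) \<le> c2 * v / (1 + c2)"
proof -
  have "c1 / (1 + c1) \<le> c2 / (1 + c2)"
    using assms by (simp add: divide_simps) (simp add: algebra_simps)
  then show ?thesis
    using assms(3) by (metis mult_right_mono times_divide_eq_left mult.commute)
qed

definition chi_sq_quotient_excess :: "nat \<Rightarrow> nat \<Rightarrow> real \<Rightarrow> ennreal" where
  "chi_sq_quotient_excess d N x = (\<integral>\<^sup>+u. ennreal (chi_sq_density N u) *
     (\<integral>\<^sup>+s. ennreal (chi_sq_density d s) * ennreal (max (s - x * u / real N) 0) \<partial>lborel) \<partial>lborel)"

lemma chi_sq_quotient_excess_antimono:
  assumes "0 \<le> x1" "x1 \<le> x2"
  shows "chi_sq_quotient_excess d N x2 \<le> chi_sq_quotient_excess d N x1"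
  unfolding chi_sq_quotient_excess_def
proof (intro nn_integral_mono)
  fix u :: real
  have "x1 * u / real N \<le> x2 * u / real N" if "u > 0"
    using assms that by (intro divide_right_mono mult_right_mono) auto
  then show "ennreal (chi_sq_density N u) *
        (\<integral>\<^sup>+s. ennreal (chi_sq_density d s) * ennreal (max (s - x2 * u / real N) 0) \<partial>lborel)
      \<le> ennreal (chi_sq_density N u) *
        (\<integral>\<^sup>+s. ennreal (chi_sq_density d s) * ennreal (max (s - x1 * u / real N) 0) \<partial>lborel)"
    by (cases "u > 0")
      (auto simp: chi_sq_density_def intro!: mult_left_mono nn_integral_mono ennreal_leI)
qed

lemma chi_sq_quotient_excess_eq:
  assumes "N > 0" "x \<ge> 0"
  shows "chi_sq_quotient_excess d N x = ennreal ((1 / (1 + x / real N)) powr (real N / 2))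
           * (\<integral>\<^sup>+v. ennreal (chi_sq_density N v) * chi_sq_tail_factor d (x / real N * v / (1 + x / real N)) \<partial>lborel)"
    (is "_ = ?rhs")
proof -
  have "chi_sq_quotient_excess d N x = (\<integral>\<^sup>+u. ennreal (chi_sq_density N u * exp (- (x / real N) * u / 2))
          * chi_sq_tail_factor d (x / real N * u) \<partial>lborel)"
    unfolding chi_sq_quotient_excess_def
  proof (intro nn_integral_cong)
    fix u :: real
    show "ennreal (chi_sq_density N u) *
        (\<integral>\<^sup>+s. ennreal (chi_sq_density d s) * ennreal (max (s - x * u / real N) 0) \<partial>lborel)
      = ennreal (chi_sq_density N u * exp (- (x / real N) * u / 2)) * chi_sq_tail_factor d (x / real N * u)"
    proof (cases "u > 0")
      case True
      then have shift_nonneg: "x * u / real N \<ge> 0"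
        using assms by simp
      show ?thesis
        unfolding nn_integral_chi_sq_excess[OF shift_nonneg]
        using chi_sq_density_nonneg[of N u] by (simp add: ennreal_mult' mult.assoc)
    qed (simp add: chi_sq_density_def)
  qed
  also have "\<dots> = ?rhs"
    using assms by (intro nn_integral_chi_sq_exp_tilt) auto
  finally show ?thesis .
qed

lemma exp_mult_chi_sq_quotient_excess_mono:
  assumes "d \<ge> 2" "N > 0" "0 \<le> x1" "x1 \<le> x2"
  shows "ennreal (exp (x1 / 2)) * chi_sq_quotient_excess d N x1
       \<le> ennreal (exp (x2 / 2)) * chi_sq_quotient_excess d N x2"
proof -
  define c1 c2 where "c1 = x1 / real N" and "c2 = x2 / real N"
  have c: "0 \<le> c1" "c1 \<le> c2"
    using assms by (auto simp: c1_def c2_def divide_right_mono)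
  have prefactor: "exp (x1 / 2) * (1 / (1 + c1)) powr (real N / 2) \<le> exp (x2 / 2) * (1 / (1 + c2)) powr (real N / 2)"
    unfolding c1_def c2_def using assms by (intro exp_mult_inverse_powr_mono) auto
  have integral: "(\<integral>\<^sup>+v. ennreal (chi_sq_density N v) * chi_sq_tail_factor d (c1 * v / (1 + c1)) \<partial>lborel)
      \<le> (\<integral>\<^sup>+v. ennreal (chi_sq_density N v) * chi_sq_tail_factor d (c2 * v / (1 + c2)) \<partial>lborel)"
  proof (intro nn_integral_mono)
    fix v :: real
    show "ennreal (chi_sq_density N v) * chi_sq_tail_factor d (c1 * v / (1 + c1))
        \<le> ennreal (chi_sq_density N v) * chi_sq_tail_factor d (c2 * v / (1 + c2))"
      using c assms(1)
      by (cases "v \<ge> 0") (auto simp: chi_sq_density_def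
          intro!: mult_left_mono chi_sq_tail_factor_mono mult_divide_one_plus_mono)
  qed
  have "ennreal (exp (x1 / 2)) * chi_sq_quotient_excess d N x1
      = ennreal (exp (x1 / 2) * (1 / (1 + c1)) powr (real N / 2))
        * (\<integral>\<^sup>+v. ennreal (chi_sq_density N v) * chi_sq_tail_factor d (c1 * v / (1 + c1)) \<partial>lborel)"
    using assms by (simp add: chi_sq_quotient_excess_eq c1_def ennreal_mult' mult.assoc)
  also have "\<dots> \<le> ennreal (exp (x2 / 2) * (1 / (1 + c2)) powr (real N / 2))
        * (\<integral>\<^sup>+v. ennreal (chi_sq_density N v) * chi_sq_tail_factor d (c2 * v / (1 + c2)) \<partial>lborel)"
    using ennreal_leI[OF prefactor] integral by (rule mult_mono) auto
  also have "\<dots> = ennreal (exp (x2 / 2)) * chi_sq_quotient_excess d N x2"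
    using assms by (simp add: chi_sq_quotient_excess_eq c2_def ennreal_mult' mult.assoc)
  finally show ?thesis .
qed

lemma enn2real_exp_mult_chi_sq_quotient_excess_mono:
  assumes "d \<ge> 2" "N > 0" "0 \<le> x1" "x1 \<le> x2"
  shows "exp (x1 / 2) * enn2real (chi_sq_quotient_excess d N x1)
       \<le> exp (x2 / 2) * enn2real (chi_sq_quotient_excess d N x2)"
proof (cases "chi_sq_quotient_excess d N x2 = \<top>")
  case True
  then have "chi_sq_quotient_excess d N x1 = \<top>"
    using chi_sq_quotient_excess_antimono[OF assms(3,4), of d N] by (simp add: top_unique)
  then show ?thesis
    using True by simp
next
  case False
  then have "ennreal (exp (x2 / 2)) * chi_sq_quotient_excess d N x2 \<noteq> \<top>"
    by (simp add: ennreal_mult_eq_top_iff)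
  with exp_mult_chi_sq_quotient_excess_mono[OF assms]
  have "enn2real (ennreal (exp (x1 / 2)) * chi_sq_quotient_excess d N x1)
      \<le> enn2real (ennreal (exp (x2 / 2)) * chi_sq_quotient_excess d N x2)"
    by (intro enn2real_mono) (auto simp: top.not_eq_extremum)
  then show ?thesis
    by (simp add: enn2real_mult)
qed

lemma (in prob_space) nn_integral_indep_distributed:
  fixes h :: "real \<Rightarrow> real \<Rightarrow> ennreal"
  assumes X: "distributed M lborel X f" and Y: "distributed M lborel Y g"
    and indep: "indep_var borel X borel Y"
    and [measurable]: "case_prod h \<in> borel_measurable (borel \<Otimes>\<^sub>M borel)"
  shows "(\<integral>\<^sup>+\<omega>. h (X \<omega>) (Y \<omega>) \<partial>M) = (\<integral>\<^sup>+y. g y * (\<integral>\<^sup>+x. f x * h x y \<partial>lborel) \<partial>lborel)"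
proof -
  note [measurable] = distributed_borel_measurable[OF X] distributed_borel_measurable[OF Y]
    distributed_measurable[OF X] distributed_measurable[OF Y]
  have lborel_borel: "distr M (lborel \<Otimes>\<^sub>M lborel) Z = distr M (borel \<Otimes>\<^sub>M borel) Z"
    "distr M lborel Z' = distr M borel Z'" for Z and Z' :: "'a \<Rightarrow> real"
    by (auto intro!: distr_cong sets_pair_measure_cong)
  have "distr M lborel X \<Otimes>\<^sub>M distr M lborel Y = distr M (lborel \<Otimes>\<^sub>M lborel) (\<lambda>\<omega>. (X \<omega>, Y \<omega>))"
    using indep unfolding indep_var_distribution_eq lborel_borel by simp
  then have "distributed M (lborel \<Otimes>\<^sub>M lborel) (\<lambda>\<omega>. (X \<omega>, Y \<omega>)) (\<lambda>(x, y). f x * g y)"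
    by (intro distributed_joint_indep'[OF _ _ X Y]) (auto intro: lborel.sigma_finite_measure_axioms)
  then have "(\<integral>\<^sup>+\<omega>. h (X \<omega>) (Y \<omega>) \<partial>M) = (\<integral>\<^sup>+z. (\<lambda>(x, y). f x * g y) z * case_prod h z \<partial>(lborel \<Otimes>\<^sub>M lborel))"
    by (subst distributed_nn_integral) auto
  also have "\<dots> = (\<integral>\<^sup>+y. \<integral>\<^sup>+x. g y * (f x * h x y) \<partial>lborel \<partial>lborel)"
    by (subst lborel_pair.nn_integral_snd[symmetric]) (auto simp: ac_simps)
  also have "\<dots> = (\<integral>\<^sup>+y. g y * (\<integral>\<^sup>+x. f x * h x y \<partial>lborel) \<partial>lborel)"
    by (intro nn_integral_cong nn_integral_cmult) measurable
  finally show ?thesis .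
qed

lemma (in prob_space) expectation_chi_sq_quotient_excess:
  assumes "distributed M lborel Xd (\<lambda>t. ennreal (chi_sq_density d t))"
    and "distributed M lborel XN (\<lambda>t. ennreal (chi_sq_density N t))"
    and "indep_var borel Xd borel XN"
  shows "expectation (\<lambda>\<omega>. max (Xd \<omega> - x * XN \<omega> / real N) 0) = enn2real (chi_sq_quotient_excess d N x)"
proof -
  have [measurable]: "Xd \<in> borel_measurable M" "XN \<in> borel_measurable M"
    using distributed_measurable[OF assms(1)] distributed_measurable[OF assms(2)] by simp_all
  have "expectation (\<lambda>\<omega>. max (Xd \<omega> - x * XN \<omega> / real N) 0)
      = enn2real (\<integral>\<^sup>+\<omega>. ennreal (max (Xd \<omega> - x * XN \<omega> / real N) 0) \<partial>M)"
    by (rule integral_eq_nn_integral) auto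
  also have "(\<integral>\<^sup>+\<omega>. ennreal (max (Xd \<omega> - x * XN \<omega> / real N) 0) \<partial>M) = chi_sq_quotient_excess d N x"
    unfolding chi_sq_quotient_excess_def
    by (rule nn_integral_indep_distributed[OF assms, where h = "\<lambda>s u. ennreal (max (s - x * u / real N) 0)"])
      measurable
  finally show ?thesis .
qed

lemma (in prob_space) expectation_chi_sq_2_excess:
  assumes "distributed M lborel X (\<lambda>t. ennreal (chi_sq_density 2 t))" "x \<ge> 0"
  shows "expectation (\<lambda>\<omega>. max (X \<omega> - x) 0) = exp (- x / 2) * enn2real (chi_sq_tail_factor 2 0)"
proof -
  have [measurable]: "X \<in> borel_measurable M"
    using distributed_measurable[OF assms(1)] by simp
  have "expectation (\<lambda>\<omega>. max (X \<omega> - x) 0) = enn2real (\<integral>\<^sup>+\<omega>. ennreal (max (X \<omega> - x) 0) \<partial>M)"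
    by (rule integral_eq_nn_integral) auto
  also have "(\<integral>\<^sup>+\<omega>. ennreal (max (X \<omega> - x) 0) \<partial>M)
      = (\<integral>\<^sup>+t. ennreal (chi_sq_density 2 t) * ennreal (max (t - x) 0) \<partial>lborel)"
    by (subst distributed_nn_integral[OF assms(1), symmetric]) auto
  also have "\<dots> = ennreal (exp (- x / 2)) * chi_sq_tail_factor 2 0"
    by (simp only: nn_integral_chi_sq_excess[OF assms(2)] chi_sq_tail_factor_2[OF assms(2)])
  finally show ?thesis
    by (simp add: enn2real_mult)
qed

theorem lemma5:
  fixes M :: "'a measure" and Xd XN X2 :: "'a \<Rightarrow> real" and d N :: nat
  assumes "prob_space M"
    and "d \<ge> 2" and "N \<ge> 1"
    and "distributed M lborel Xd (\<lambda>t. ennreal (chi_sq_density d t))"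
    and "distributed M lborel XN (\<lambda>t. ennreal (chi_sq_density N t))"
    and "distributed M lborel X2 (\<lambda>t. ennreal (chi_sq_density 2 t))"
    and "prob_space.indep_var M borel Xd borel XN"
  shows "mono_on {real d..}
           (\<lambda>x. prob_space.expectation M (\<lambda>\<omega>. max (Xd \<omega> - x * XN \<omega> / real N) 0)
                / prob_space.expectation M (\<lambda>\<omega>. max (X2 \<omega> - x) 0))"
proof (rule mono_onI)
  interpret prob_space M by fact
  define c where "c = enn2real (chi_sq_tail_factor 2 0)"
  have ratio: "expectation (\<lambda>\<omega>. max (Xd \<omega> - x * XN \<omega> / real N) 0) / expectation (\<lambda>\<omega>. max (X2 \<omega> - x) 0)
      = exp (x / 2) * enn2real (chi_sq_quotient_excess d N x) / c" if "x \<ge> 0" for x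
    using that assms(4-7)
    by (simp add: expectation_chi_sq_quotient_excess expectation_chi_sq_2_excess c_def exp_minus field_simps)
  fix x1 x2 :: real
  assume "x1 \<in> {real d..}" "x2 \<in> {real d..}" "x1 \<le> x2"
  then have "0 \<le> x1" "x1 \<le> x2" "0 \<le> x2"
    by auto
  moreover have "c \<ge> 0"
    by (simp add: c_def)
  ultimately show "expectation (\<lambda>\<omega>. max (Xd \<omega> - x1 * XN \<omega> / real N) 0) / expectation (\<lambda>\<omega>. max (X2 \<omega> - x1) 0)
      \<le> expectation (\<lambda>\<omega>. max (Xd \<omega> - x2 * XN \<omega> / real N) 0) / expectation (\<lambda>\<omega>. max (X2 \<omega> - x2) 0)"
    using assms(2,3) unfolding ratio[OF \<open>0 \<le> x1\<close>] ratio[OF \<open>0 \<le> x2\<close>]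
    by (intro divide_right_mono enn2real_exp_mult_chi_sq_quotient_excess_mono) auto
qed

end
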